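(* Let $n\ge1$. The map $\phi:\mathcal{L}_{n-1}C_n\to\mathcal{A}_n$ is a bijection satisfying $\mathrm{cDes}(\phi\pi)=\mathrm{cDes}(\pi)$ and $(\phi\pi)^{-1}(n)=\pi^{-1}(n)$ for all $\pi\in\mathcal{L}_{n-1}C_n$. In particular, \[\sum_{\pi\in\mathcal{A}_n}\mathbf{x}^{\mathrm{cDes}(\pi)}t^{\pi^{-1}(n)}=\sum_{\pi\in\mathcal{L}_{n-1}C_n}\mathbf{x}^{\mathrm{cDes}(\pi)}t^{\pi^{-1}(n)}.\]
   Context: Permutations are in one-line notation, composed right to left; $c_n=(1,2,\dots,n)=23\cdots n1$, $C_n=\langle c_n\rangle$, and $AC_n=\{\sigma c:\sigma\in A,c\in C_n\}$. $\mathrm{Des}(\pi)=\{i\in[n-1]:\pi(i)>\pi(i+1)\}$, $\mathrm{cDes}(\pi)=\{i\in[n]:\pi(i)>\pi(i+1)\}$ with $\pi(n+1):=\pi(1)$; the descent set of any sequence of distinct integers is defined likewise; $\mathbf{x}^J=\prod_{i\in J}x_i$. A sequence $a_1,\dots,a_m$ of distinct integers is left-unimodal if it is the union of an increasing subsequence and a decreasing subsequence intersecting at $a_1$ (equivalently every prefix is an interval of integers when the values form an interval); it is right-unimodal if $a_m,\dots,a_1$ is left-unimodal. For any set $X$ of $m$ integers and $D\subseteq[m-1]$ there is a unique left-unimodal (resp. right-unimodal) arrangement of $X$ with descent set $D$. $\mathcal{L}_{n-1}$ is the set of left-unimodal permutations in $\mathfrak{S}_{n-1}$, viewed in $\mathfrak{S}_n$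 as fixing $n$. $\mathcal{A}_n$ is the set of $\pi\in\mathfrak{S}_n$ such that each $\{\pi(1),\dots,\pi(j)\}$ is an interval in $\mathbb{Z}_n$. The map $\phi$: given $\pi\in\mathcal{L}_{n-1}C_n$, let $j=\pi^{-1}(n)$. Set $(\phi\pi)(j)=n$. If $n\in\mathrm{cDes}(\pi)$, the set of the first $j-1$ entries of $\phi\pi$ is $[j-1]$; otherwise it is $[n-1]\setminus[n-j]$ (the remaining $n-j$ entries occupy positions $j+1,\dots,n$). The first $j-1$ entries are arranged as the unique left-unimodal sequence on their set with descent set $\mathrm{Des}(\pi)\cap[j-2]$, and the last $n-j$ entries as the unique right-unimodal sequence on their set with descent set $\{i-j: i\in\mathrm{Des}(\pi), i>j\}$. *)

theory Defs
  imports "HOL-Combinatorics.Permutations"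
begin

text \<open>Permutations of [n] = {1..n} are functions nat => nat permuting {1..n}
  (hence fixing everything outside {1..n}); one-line notation pi(1)...pi(n).
  Composition is function composition (right to left).\<close>

definition seq_des :: "nat list \<Rightarrow> nat set" where
  "seq_des xs = {i \<in> {1..<length xs}. xs ! (i - 1) > xs ! i}"

text \<open>Left-unimodal: union of an increasing and a decreasing subsequence meeting
  at the first entry, i.e. entries above the first entry appear increasingly and
  entries below it appear decreasingly.\<close>
definition left_unimodal :: "nat list \<Rightarrow> bool" where
  "left_unimodal xs \<longleftrightarrow> distinct xs \<and>
     sorted (filter (\<lambda>x. x > hd xs) xs) \<and>
     sorted (rev (filter (\<lambda>x. x < hd xs) xs))"

definition right_unimodal :: "nat list \<Rightarrow> bool" where
  "right_unimodal xs \<longleftrightarrow> left_unimodal (rev xs)"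

text \<open>The unique left-/right-unimodal arrangement of a finite set with given descent set.\<close>
definition lu_arr :: "nat set \<Rightarrow> nat set \<Rightarrow> nat list" where
  "lu_arr X D = (THE xs. set xs = X \<and> distinct xs \<and> left_unimodal xs \<and> seq_des xs = D)"

definition ru_arr :: "nat set \<Rightarrow> nat set \<Rightarrow> nat list" where
  "ru_arr X D = (THE xs. set xs = X \<and> distinct xs \<and> right_unimodal xs \<and> seq_des xs = D)"

definition Des :: "nat \<Rightarrow> (nat \<Rightarrow> nat) \<Rightarrow> nat set" where
  "Des n p = {i \<in> {1..<n}. p i > p (i + 1)}"

definition cDes :: "nat \<Rightarrow> (nat \<Rightarrow> nat) \<Rightarrow> nat set" where
  "cDes n p = {i \<in> {1..n}. p i > p (if i = n then 1 else i + 1)}"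

definition cyc :: "nat \<Rightarrow> nat \<Rightarrow> nat" where
  "cyc n i = (if 1 \<le> i \<and> i < n then i + 1 else if i = n then 1 else i)"

text \<open>L_{n-1}: left-unimodal permutations of [n-1], viewed in S_n fixing n.\<close>
definition Lset :: "nat \<Rightarrow> (nat \<Rightarrow> nat) set" where
  "Lset n = {s. s permutes {1..n-1} \<and> left_unimodal (map s [1..<n])}"

definition LC :: "nat \<Rightarrow> (nat \<Rightarrow> nat) set" where
  "LC n = {s \<circ> (cyc n ^^ k) | s k. s \<in> Lset n}"

text \<open>Intervals of Z_n, identifying Z_n with {1..n}.\<close>
definition cyc_interval :: "nat \<Rightarrow> nat set \<Rightarrow> bool" where
  "cyc_interval n S \<longleftrightarrow> (\<exists>a m. S = {(a + i) mod n + 1 | i. i < m})"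

definition Aset :: "nat \<Rightarrow> (nat \<Rightarrow> nat) set" where
  "Aset n = {p. p permutes {1..n} \<and> (\<forall>j\<in>{1..n}. cyc_interval n (p ` {1..j}))}"

definition phi :: "nat \<Rightarrow> (nat \<Rightarrow> nat) \<Rightarrow> (nat \<Rightarrow> nat)" where
  "phi n p =
    (let j = inv p n;
         S1 = (if n \<in> cDes n p then {1..j-1} else {1..n-1} - {1..n-j});
         S2 = {1..n-1} - S1;
         L = lu_arr S1 (Des n p \<inter> {1..j-2});
         R = ru_arr S2 {i - j | i. i \<in> Des n p \<and> i > j};
         w = L @ [n] @ R
     in (\<lambda>i. if i \<in> {1..n} then w ! (i - 1) else i))"

end

theory Submission
  imports Defs
begin

text \<open>
  Write a permutation of [n] in one-line notation as xs n ys. Its two statistics, the position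
  of n and the cyclic descent set, carry the same information as the length of xs, the descent
  sets of xs and ys, and whether n is a cyclic descent, i.e. whether the first entry is smaller
  than the last.

  The permutation lies in A_n iff every prefix of xs and every suffix of ys is an interval of
  integers. This says that xs is left-unimodal, ys is right-unimodal, and set xs is either
  {1..|xs|} or {n-|xs|..n-1}, the choice being dictated by the cyclic descent at n. So phi maps
  every permutation into A_n without changing the statistics, and fixes A_n pointwise.

  The elements of L_{n-1}C_n are the words xs n ys with ys xs left-unimodal. By uniqueness of
  unimodal arrangements such an element is determined by its statistics, and by existence every
  value of the statistics occurs in L_{n-1}C_n. Hence phi is injective on L_{n-1}C_n with image
  A_n, and the identity of generating functions is a reindexing of the sum.
\<close>

section \<open>Descent sets of words\<close>

lemma seq_des_subset: "seq_des xs \<subseteq> {1..<length xs}"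
  by (auto simp: seq_des_def)

lemma seq_des_append:
  "seq_des (xs @ ys) = seq_des xs \<union> (\<lambda>i. i + length xs) ` seq_des ys \<union>
     (if xs \<noteq> [] \<and> ys \<noteq> [] \<and> hd ys < last xs then {length xs} else {})"
proof (rule set_eqI)
  fix i
  consider "i < length xs" | "i = length xs" | "length xs < i" by linarith
  then show "i \<in> seq_des (xs @ ys) \<longleftrightarrow> i \<in> seq_des xs \<union> (\<lambda>i. i + length xs) ` seq_des ys \<union>
     (if xs \<noteq> [] \<and> ys \<noteq> [] \<and> hd ys < last xs then {length xs} else {})"
  proof cases
    case 1
    then show ?thesis by (auto simp: seq_des_def nth_append)
  next
    case 2
    then show ?thesis
      by (cases xs; cases ys) (auto simp: seq_des_def nth_append last_conv_nth hd_conv_nth)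
  next
    case 3
    then have "i \<in> (\<lambda>i. i + length xs) ` seq_des ys \<longleftrightarrow> i - length xs \<in> seq_des ys"
      by (auto simp: image_iff intro: bexI[of _ "i - length xs"])
    with 3 show ?thesis
      by (auto simp: seq_des_def nth_append)
  qed
qed

lemma seq_des_snoc:
  "seq_des (xs @ [x]) = seq_des xs \<union> (if xs \<noteq> [] \<and> x < last xs then {length xs} else {})"
proof -
  have "seq_des [x] = {}" by (simp add: seq_des_def)
  then show ?thesis by (simp add: seq_des_append)
qed

lemma seq_des_butlast: "seq_des xs = seq_des (xs @ [x]) - {length xs}"
  using seq_des_subset[of xs] by (auto simp: seq_des_snoc)

lemma seq_des_append_parts:
  "seq_des xs = seq_des (xs @ ys) \<inter> {..<length xs}"
  "seq_des ys = {i. 0 < i \<and> i + length xs \<in> seq_des (xs @ ys)}"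
  "length xs \<in> seq_des (xs @ ys) \<longleftrightarrow> xs \<noteq> [] \<and> ys \<noteq> [] \<and> hd ys < last xs"
  using seq_des_subset[of xs] seq_des_subset[of ys] by (auto simp: seq_des_append)

lemma seq_des_append_eq_iff:
  assumes "length xs = length xs'" "length ys = length ys'"
  shows "seq_des (xs @ ys) = seq_des (xs' @ ys') \<longleftrightarrow>
    seq_des xs = seq_des xs' \<and> seq_des ys = seq_des ys' \<and>
    (xs \<noteq> [] \<and> ys \<noteq> [] \<and> hd ys < last xs \<longleftrightarrow> xs' \<noteq> [] \<and> ys' \<noteq> [] \<and> hd ys' < last xs')"
proof
  assume eq: "seq_des (xs @ ys) = seq_des (xs' @ ys')"
  have "seq_des xs = seq_des xs'"
    using seq_des_append_parts(1)[of xs ys] seq_des_append_parts(1)[of xs' ys'] eq assms(1) by simp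
  moreover have "seq_des ys = seq_des ys'"
    using seq_des_append_parts(2)[where xs=xs and ys=ys]
      seq_des_append_parts(2)[where xs=xs' and ys=ys'] eq assms(1) by simp
  moreover have "length xs \<in> seq_des (xs @ ys) \<longleftrightarrow> length xs' \<in> seq_des (xs' @ ys')"
    using eq assms(1) by simp
  ultimately show "seq_des xs = seq_des xs' \<and> seq_des ys = seq_des ys' \<and>
    (xs \<noteq> [] \<and> ys \<noteq> [] \<and> hd ys < last xs \<longleftrightarrow> xs' \<noteq> [] \<and> ys' \<noteq> [] \<and> hd ys' < last xs')"
    unfolding seq_des_append_parts(3) by blast
qed (use assms in \<open>simp add: seq_des_append\<close>)

lemma seq_des_append_Cons:
  "seq_des (xs @ v # ys) = seq_des xs \<union> (\<lambda>i. i + (length xs + 1)) ` seq_des ys \<union>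
     (if xs \<noteq> [] \<and> v < last xs then {length xs} else {}) \<union>
     (if ys \<noteq> [] \<and> hd ys < v then {length xs + 1} else {})"
proof -
  have "seq_des (v # ys) = Suc ` seq_des ys \<union> (if ys \<noteq> [] \<and> hd ys < v then {1} else {})"
    using seq_des_append[of "[v]" ys] by (simp add: seq_des_def)
  then show ?thesis
    using seq_des_append[of xs "v # ys"] by (auto simp: image_image)
qed

text \<open>Stated in the shape in which phi uses them, with n at position j = length xs + 1.\<close>

lemma seq_des_append_Cons_parts:
  "seq_des (xs @ v # ys) \<inter> {1..length xs + 1 - 2} = seq_des xs"
  "{i - (length xs + 1) | i. i \<in> seq_des (xs @ v # ys) \<and> length xs + 1 < i} = seq_des ys"
proof -
  have "{1..length xs + 1 - 2} = {1..<length xs}" by auto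
  then show "seq_des (xs @ v # ys) \<inter> {1..length xs + 1 - 2} = seq_des xs"
    using seq_des_subset[of xs] by (auto simp: seq_des_append_Cons)
  have "{i \<in> seq_des (xs @ v # ys). length xs + 1 < i} = (\<lambda>i. i + (length xs + 1)) ` seq_des ys"
    using seq_des_subset[of xs] seq_des_subset[of ys] by (auto simp: seq_des_append_Cons)
  then have "{i - (length xs + 1) | i. i \<in> seq_des (xs @ v # ys) \<and> length xs + 1 < i} =
      (\<lambda>i. i - (length xs + 1)) ` (\<lambda>i. i + (length xs + 1)) ` seq_des ys"
    by blast
  then show "{i - (length xs + 1) | i. i \<in> seq_des (xs @ v # ys) \<and> length xs + 1 < i} = seq_des ys"
    by (simp add: image_image)
qed

lemma seq_des_append_Cons_eq_iff:
  assumes len: "length xs = length xs'" "length ys = length ys'"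
    and below: "\<forall>x\<in>set (xs @ ys). x < v" "\<forall>x\<in>set (xs' @ ys'). x < v"
  shows "seq_des (xs @ v # ys) = seq_des (xs' @ v # ys') \<longleftrightarrow>
    seq_des xs = seq_des xs' \<and> seq_des ys = seq_des ys'"
proof
  assume eq: "seq_des (xs @ v # ys) = seq_des (xs' @ v # ys')"
  have "seq_des xs = seq_des (xs @ v # ys) \<inter> {1..length xs + 1 - 2}"
    by (rule seq_des_append_Cons_parts(1)[symmetric])
  also have "\<dots> = seq_des xs'"
    using eq len(1) seq_des_append_Cons_parts(1)[of xs' v ys'] by simp
  finally have "seq_des xs = seq_des xs'" .
  moreover have
    "seq_des ys = {i - (length xs + 1) | i. i \<in> seq_des (xs @ v # ys) \<and> length xs + 1 < i}"
    by (rule seq_des_append_Cons_parts(2)[symmetric])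
  then have "seq_des ys = seq_des ys'"
    using eq len(1) seq_des_append_Cons_parts(2)[of xs' v ys'] by simp
  ultimately show "seq_des xs = seq_des xs' \<and> seq_des ys = seq_des ys'" by blast
next
  assume "seq_des xs = seq_des xs' \<and> seq_des ys = seq_des ys'"
  then have des: "seq_des xs = seq_des xs'" "seq_des ys = seq_des ys'" by simp_all
  have "\<not> (xs \<noteq> [] \<and> v < last xs)" "\<not> (xs' \<noteq> [] \<and> v < last xs')"
    using below last_in_set by (metis UnI1 not_less_iff_gr_or_eq set_append)+
  then have J: "(if xs \<noteq> [] \<and> v < last xs then {length xs} else {}) = {}"
    "(if xs' \<noteq> [] \<and> v < last xs' then {length xs} else {}) = {}"
    by simp_all
  have J': "(if ys \<noteq> [] \<and> hd ys < v then {length xs + 1} else {}) =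
      (if ys' \<noteq> [] \<and> hd ys' < v then {length xs + 1} else {})"
    using len below by (cases ys; cases ys') auto
  show "seq_des (xs @ v # ys) = seq_des (xs' @ v # ys')"
    by (simp only: seq_des_append_Cons len(1)[symmetric] J J' des)
qed

lemma seq_des_rev:
  assumes "distinct xs"
  shows "seq_des (rev xs) = {i \<in> {1..<length xs}. length xs - i \<notin> seq_des xs}"
proof (rule set_eqI)
  fix i
  show "i \<in> seq_des (rev xs) \<longleftrightarrow> i \<in> {i \<in> {1..<length xs}. length xs - i \<notin> seq_des xs}"
  proof (cases "i \<in> {1..<length xs}")
    case True
    then have "rev xs ! (i - 1) = xs ! (length xs - i)" "rev xs ! i = xs ! (length xs - i - 1)"
      by (auto simp: rev_nth Suc_diff_Suc)
    moreover have "xs ! (length xs - i - 1) \<noteq> xs ! (length xs - i)"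
      using True assms by (subst nth_eq_iff_index_eq) auto
    ultimately show ?thesis
      using True by (auto simp: seq_des_def Suc_diff_Suc)
  qed (auto simp: seq_des_def)
qed

section \<open>Unimodal arrangements\<close>

lemma left_unimodal_Nil [simp]: "left_unimodal []"
  by (simp add: left_unimodal_def)

lemma left_unimodal_distinct: "left_unimodal xs \<Longrightarrow> distinct xs"
  by (simp add: left_unimodal_def)

lemma right_unimodal_distinct: "right_unimodal xs \<Longrightarrow> distinct xs"
  by (simp add: right_unimodal_def left_unimodal_def)

lemma left_unimodal_snoc:
  "left_unimodal (xs @ [x]) \<longleftrightarrow> left_unimodal xs \<and> x \<notin> set xs \<and>
     ((\<forall>y\<in>set xs. y < x) \<or> (\<forall>y\<in>set xs. x < y))"
proof (cases xs)
  case (Cons h t)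
  show ?thesis
  proof (cases "x < h")
    case True
    then show ?thesis using Cons
      by (auto simp: left_unimodal_def sorted_append sorted_wrt_append not_less le_less)
        (metis linorder_neqE_nat less_trans)+
  next
    case False
    then show ?thesis using Cons
      by (auto simp: left_unimodal_def sorted_append sorted_wrt_append not_less le_less)
        (metis linorder_neqE_nat less_trans)+
  qed
qed (simp add: left_unimodal_def)

lemma left_unimodal_last:
  assumes lu: "left_unimodal (xs @ [x])" and "xs \<noteq> []"
  shows "x = (if length xs \<in> seq_des (xs @ [x]) then Min (set (xs @ [x]))
    else Max (set (xs @ [x])))"
proof -
  have des: "length xs \<in> seq_des (xs @ [x]) \<longleftrightarrow> x < last xs"
    using \<open>xs \<noteq> []\<close> seq_des_subset[of xs] by (auto simp: seq_des_snoc)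
  have last: "last xs \<in> set xs" using \<open>xs \<noteq> []\<close> by simp
  from lu consider "\<forall>y\<in>set xs. y < x" | "\<forall>y\<in>set xs. x < y"
    by (auto simp: left_unimodal_snoc)
  then show ?thesis
  proof cases
    case 1
    then have "Max (set (xs @ [x])) = x" by (intro Max_eqI) auto
    moreover have "\<not> x < last xs" using 1 last by auto
    ultimately show ?thesis using des by simp
  next
    case 2
    then have "Min (set (xs @ [x])) = x" by (intro Min_eqI) auto
    moreover have "x < last xs" using 2 last by auto
    ultimately show ?thesis using des by simp
  qed
qed

lemma left_unimodal_unique:
  "left_unimodal xs \<Longrightarrow> left_unimodal ys \<Longrightarrow> set xs = set ys \<Longrightarrow> seq_des xs = seq_des ys \<Longrightarrow> xs = ys"
proof (induction xs arbitrary: ys rule: rev_induct)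
  case (snoc x xs)
  have "length ys = length (xs @ [x])"
    using snoc.prems by (metis distinct_card left_unimodal_distinct)
  then obtain ys' y where ys: "ys = ys' @ [y]" and len: "length ys' = length xs"
    by (cases ys rule: rev_cases) auto
  have "y = x"
  proof (cases "xs = []")
    case True
    then show ?thesis using snoc.prems(3) ys len by simp
  next
    case False
    with len have "ys' \<noteq> []" by auto
    have "left_unimodal (ys' @ [y])" using snoc.prems(2) ys by simp
    note y = left_unimodal_last[OF this \<open>ys' \<noteq> []\<close>]
    have eqs: "set (xs @ [x]) = set (ys' @ [y])" "seq_des (xs @ [x]) = seq_des (ys' @ [y])"
      using snoc.prems(3,4) ys by simp_all
    have "x = (if length ys' \<in> seq_des (ys' @ [y]) then Min (set (ys' @ [y]))
        else Max (set (ys' @ [y])))"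
      using left_unimodal_last[OF snoc.prems(1) False] unfolding eqs len .
    with y show ?thesis by (rule trans[OF _ sym])
  qed
  moreover have "set xs = set ys'"
    using snoc.prems ys \<open>y = x\<close> by (auto simp: left_unimodal_snoc)
  moreover have "seq_des xs = seq_des ys'"
    using snoc.prems(4) ys len seq_des_butlast[of xs x] seq_des_butlast[of ys' y] by simp
  ultimately show ?case
    using snoc ys by (auto simp: left_unimodal_snoc)
qed simp

lemma left_unimodal_exists:
  assumes "finite X" "D \<subseteq> {1..<card X}"
  shows "\<exists>xs. set xs = X \<and> left_unimodal xs \<and> seq_des xs = D"
  using assms
proof (induction "card X" arbitrary: X D)
  case 0
  then show ?case by (intro exI[of _ "[]"]) (auto simp: seq_des_def)
next
  case (Suc k)
  define x where "x = (if k \<in> D then Min X else Max X)"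
  have "X \<noteq> {}" using Suc.hyps(2) by auto
  then have x: "x \<in> X" using Suc.prems(1) by (simp add: x_def)
  have "card (X - {x}) = k"
    using x Suc.hyps(2) by simp
  moreover have "D - {k} \<subseteq> {1..<k}"
    using Suc.hyps(2) Suc.prems(2) by auto
  ultimately obtain xs where xs: "set xs = X - {x}" "left_unimodal xs" "seq_des xs = D - {k}"
    using Suc.hyps(1) Suc.prems(1) by (metis finite_Diff)
  have len: "length xs = k"
    using xs \<open>card (X - {x}) = k\<close> by (metis distinct_card left_unimodal_distinct)
  have extreme: "(k \<in> D \<longrightarrow> (\<forall>y\<in>set xs. x < y)) \<and> (k \<notin> D \<longrightarrow> (\<forall>y\<in>set xs. y < x))"
    using xs(1) Suc.prems(1) by (auto simp: x_def intro: Min_le Max_ge le_neq_trans)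
  have "xs \<noteq> [] \<and> x < last xs \<longleftrightarrow> k \<in> D"
  proof (cases "xs = []")
    case True
    then show ?thesis using len Suc.prems(2) by auto
  next
    case False
    then have "last xs \<in> set xs" by simp
    then have "k \<in> D \<Longrightarrow> x < last xs" "k \<notin> D \<Longrightarrow> last xs < x"
      using extreme by blast+
    then show ?thesis using False by (cases "k \<in> D") auto
  qed
  then have "seq_des (xs @ [x]) = D"
    using xs(3) len by (auto simp: seq_des_snoc)
  moreover have "left_unimodal (xs @ [x])"
    using xs extreme by (auto simp: left_unimodal_snoc)
  ultimately show ?case
    using xs(1) x by (intro exI[of _ "xs @ [x]"]) auto
qed

lemma lu_arr_spec:
  assumes "finite X" "D \<subseteq> {1..<card X}"
  shows "set (lu_arr X D) = X" "left_unimodal (lu_arr X D)" "seq_des (lu_arr X D) = D"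
proof -
  have "\<exists>!xs. set xs = X \<and> distinct xs \<and> left_unimodal xs \<and> seq_des xs = D"
    using left_unimodal_exists[OF assms] left_unimodal_unique left_unimodal_distinct by metis
  then have "set (lu_arr X D) = X \<and> distinct (lu_arr X D) \<and> left_unimodal (lu_arr X D) \<and>
      seq_des (lu_arr X D) = D"
    unfolding lu_arr_def by (rule theI')
  then show "set (lu_arr X D) = X" "left_unimodal (lu_arr X D)" "seq_des (lu_arr X D) = D"
    by simp_all
qed

lemma lu_arr_eqI: "left_unimodal xs \<Longrightarrow> lu_arr (set xs) (seq_des xs) = xs"
  unfolding lu_arr_def
  by (rule the_equality) (auto intro: left_unimodal_unique left_unimodal_distinct)

lemma right_unimodal_unique:
  assumes "right_unimodal xs" "right_unimodal ys" "set xs = set ys" "seq_des xs = seq_des ys"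
  shows "xs = ys"
proof -
  have "length xs = length ys"
    using assms by (metis distinct_card right_unimodal_distinct)
  then have "rev xs = rev ys"
    using assms by (intro left_unimodal_unique)
      (auto simp: right_unimodal_def seq_des_rev right_unimodal_distinct)
  then show ?thesis by simp
qed

lemma right_unimodal_exists:
  assumes "finite X" "D \<subseteq> {1..<card X}"
  shows "\<exists>xs. set xs = X \<and> right_unimodal xs \<and> seq_des xs = D"
proof -
  define D' where "D' = {i \<in> {1..<card X}. card X - i \<notin> D}"
  have "D' \<subseteq> {1..<card X}" by (auto simp: D'_def)
  then obtain xs where xs: "set xs = X" "left_unimodal xs" "seq_des xs = D'"
    using left_unimodal_exists[OF assms(1)] by blast
  have "length xs = card X"
    using xs by (metis distinct_card left_unimodal_distinct)
  then have "seq_des (rev xs) = D"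
    using seq_des_rev[OF left_unimodal_distinct[OF xs(2)]] xs(3) assms(2) by (auto simp: D'_def)
  then show ?thesis
    using xs by (intro exI[of _ "rev xs"]) (simp add: right_unimodal_def)
qed

lemma ru_arr_spec:
  assumes "finite X" "D \<subseteq> {1..<card X}"
  shows "set (ru_arr X D) = X" "right_unimodal (ru_arr X D)" "seq_des (ru_arr X D) = D"
proof -
  have "\<exists>!xs. set xs = X \<and> distinct xs \<and> right_unimodal xs \<and> seq_des xs = D"
    using right_unimodal_exists[OF assms] right_unimodal_unique right_unimodal_distinct by metis
  then have "set (ru_arr X D) = X \<and> distinct (ru_arr X D) \<and> right_unimodal (ru_arr X D) \<and>
      seq_des (ru_arr X D) = D"
    unfolding ru_arr_def by (rule theI')
  then show "set (ru_arr X D) = X" "right_unimodal (ru_arr X D)" "seq_des (ru_arr X D) = D"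
    by simp_all
qed

lemma ru_arr_eqI: "right_unimodal xs \<Longrightarrow> ru_arr (set xs) (seq_des xs) = xs"
  unfolding ru_arr_def
  by (rule the_equality) (auto intro: right_unimodal_unique right_unimodal_distinct)

section \<open>Intervals and cyclic intervals\<close>

definition nat_interval :: "nat set \<Rightarrow> bool" where
  "nat_interval S \<longleftrightarrow> (\<exists>a b. S = {a..b})"

lemma nat_interval_atLeastAtMost [simp]: "nat_interval {a..b}"
  by (auto simp: nat_interval_def)

lemma nat_interval_empty [simp]: "nat_interval {}"
  using nat_interval_atLeastAtMost[of 1 0] by simp

lemma nat_interval_atLeastLessThan [simp]: "nat_interval {a..<b}"
  by (cases b) (auto simp: atLeastLessThanSuc_atLeastAtMost)

lemma cyclic_run_eq:
  fixes r n m :: nat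
  assumes "r < n" "m \<le> n"
  shows "(\<lambda>i. (r + i) mod n + 1) ` {..<m} = {r + 1..min (r + m) n} \<union> {1..r + m - n}"
proof (rule set_eqI, rule iffI)
  fix y assume "y \<in> (\<lambda>i. (r + i) mod n + 1) ` {..<m}"
  then obtain i where i: "i < m" "y = (r + i) mod n + 1" by blast
  show "y \<in> {r + 1..min (r + m) n} \<union> {1..r + m - n}"
  proof (cases "r + i < n")
    case False
    then have "(r + i) mod n = r + i - n"
      using i(1) assms by (subst mod_if) simp
    then show ?thesis using i False by auto
  qed (use i in auto)
next
  fix y assume y: "y \<in> {r + 1..min (r + m) n} \<union> {1..r + m - n}"
  show "y \<in> (\<lambda>i. (r + i) mod n + 1) ` {..<m}"
  proof (cases "r < y")
    case True
    then have "y = (r + (y - r - 1)) mod n + 1" "y - r - 1 < m" using y assms by auto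
    then show ?thesis by blast
  next
    case False
    then have "y - 1 < n" "r + (n + y - 1 - r) = n + (y - 1)" using y assms by auto
    then have "(r + (n + y - 1 - r)) mod n = y - 1" by simp
    then have "y = (r + (n + y - 1 - r)) mod n + 1" "n + y - 1 - r < m" using y False assms by auto
    then show ?thesis by blast
  qed
qed

lemma cyc_interval_imp_nat_interval:
  assumes "cyc_interval n S" "S \<subseteq> {1..n}"
  shows "nat_interval S \<or> nat_interval ({1..n} - S)"
proof (cases "n = 0")
  case True
  then show ?thesis using assms(2) by simp
next
  case False
  obtain a m where "S = {(a + i) mod n + 1 | i. i < m}"
    using assms(1) by (auto simp: cyc_interval_def)
  moreover define r where "r = a mod n"
  ultimately have S: "S = (\<lambda>i. (r + i) mod n + 1) ` {..<m}"
    by (auto simp: mod_add_left_eq)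
  have r: "r < n" using False by (simp add: r_def)
  show ?thesis
  proof (cases "n \<le> m")
    case True
    have "{1..n} = (\<lambda>i. (r + i) mod n + 1) ` {..<n}"
      using cyclic_run_eq[OF r order_refl] r by auto
    also have "\<dots> \<subseteq> S" unfolding S using True by (intro image_mono) auto
    finally have "{1..n} - S = {}" by blast
    then show ?thesis by (metis nat_interval_empty)
  next
    case False
    then have "S = {r + 1..min (r + m) n} \<union> {1..r + m - n}"
      using S cyclic_run_eq[OF r] by simp
    then have "S = {r + 1..r + m} \<or> {1..n} - S = {r + m - n + 1..r}"
      using False r by auto
    then show ?thesis by (metis nat_interval_atLeastAtMost)
  qed
qed

lemma nat_interval_imp_cyc_interval:
  assumes "nat_interval S" "S \<subseteq> {1..n}"
  shows "cyc_interval n S"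
proof (cases "S = {}")
  case True
  then show ?thesis by (auto simp: cyc_interval_def intro!: exI[of _ 0])
next
  case False
  obtain a b where "S = {a..b}" using assms(1) by (auto simp: nat_interval_def)
  then have "S = (\<lambda>i. (a - 1 + i) mod n + 1) ` {..<b + 1 - a}"
    using False assms(2) cyclic_run_eq[of "a - 1" n "b + 1 - a"] by auto
  then show ?thesis by (auto simp: cyc_interval_def)
qed

lemma cyc_interval_iff_nat_interval:
  assumes "S \<subseteq> {1..n}"
  shows "cyc_interval n S \<longleftrightarrow> nat_interval S \<or> nat_interval ({1..n} - S)"
proof
  assume "nat_interval S \<or> nat_interval ({1..n} - S)"
  then show "cyc_interval n S"
  proof
    assume "nat_interval ({1..n} - S)"
    then obtain a b where S: "S = {1..n} - {a..b}"
      using assms unfolding nat_interval_def by blast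
    consider "b < a \<or> n < a" | "a = 0" | "1 \<le> a" "a \<le> n" "n \<le> b" | "1 \<le> a" "a \<le> b" "b < n"
      by linarith
    then show ?thesis
    proof cases
      case 1
      then have "S = {1..n}" using S by auto
      then show ?thesis using nat_interval_imp_cyc_interval by simp
    next
      case 2
      then have "S = {b + 1..n}" using S by auto
      then show ?thesis using nat_interval_imp_cyc_interval by simp
    next
      case 3
      then have "S = {1..a - 1}" using S by auto
      then show ?thesis using 3 by (intro nat_interval_imp_cyc_interval) auto
    next
      case 4
      then have "b + (n + a - b - 1) = n + a - 1" "n + a - b - 1 \<le> n" by auto
      then have "(\<lambda>i. (b + i) mod n + 1) ` {..<n + a - b - 1} = {b + 1..n} \<union> {1..a - 1}"
        using cyclic_run_eq[of b n "n + a - b - 1"] 4 by simp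
      then have "S = (\<lambda>i. (b + i) mod n + 1) ` {..<n + a - b - 1}"
        using S 4 by auto
      then show ?thesis by (auto simp: cyc_interval_def)
    qed
  qed (use nat_interval_imp_cyc_interval assms in blast)
qed (use cyc_interval_imp_nat_interval assms in blast)

lemma nat_interval_remove:
  assumes "nat_interval T" "x \<in> T" "(\<forall>y\<in>T - {x}. y < x) \<or> (\<forall>y\<in>T - {x}. x < y)"
  shows "nat_interval (T - {x})"
proof -
  obtain a b where T: "T = {a..b}" using assms(1) by (auto simp: nat_interval_def)
  have ax: "a \<le> x" "x \<le> b" using assms(2) T by auto
  from assms(3) have "x = b \<or> x = a"
  proof
    assume below: "\<forall>y\<in>T - {x}. y < x"
    show ?thesis
    proof (rule ccontr)
      assume "\<not> ?thesis"
      then have "b \<in> T - {x}" using ax T by auto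
      then have "b < x" using below by blast
      then show False using ax by simp
    qed
  next
    assume above: "\<forall>y\<in>T - {x}. x < y"
    show ?thesis
    proof (rule ccontr)
      assume "\<not> ?thesis"
      then have "a \<in> T - {x}" using ax T by auto
      then have "x < a" using above by blast
      then show False using ax by simp
    qed
  qed
  then show ?thesis
  proof
    assume "x = b"
    then have "T - {x} = {a..<b}" unfolding T by auto
    then show ?thesis by simp
  next
    assume "x = a"
    then have "T - {x} = {a + 1..b}" unfolding T by auto
    then show ?thesis by simp
  qed
qed

lemma extreme_if_nat_interval_remove:
  assumes "nat_interval (T - {x})"
  shows "(\<forall>y\<in>T - {x}. y < x) \<or> (\<forall>y\<in>T - {x}. x < y)"
proof -
  obtain c d where cd: "T - {x} = {c..d}" using assms by (auto simp: nat_interval_def)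
  show ?thesis
  proof (rule ccontr)
    assume "\<not> ?thesis"
    then obtain y z where y: "y \<in> T - {x}" "\<not> y < x" and z: "z \<in> T - {x}" "\<not> x < z"
      by blast
    moreover have "y \<noteq> x" "z \<noteq> x" using y(1) z(1) by auto
    ultimately have "c \<le> z" "z < x" "x < y" "y \<le> d" unfolding cd by auto
    then have "x \<in> T - {x}" unfolding cd by simp
    then show False by simp
  qed
qed

lemma nat_interval_remove_iff:
  assumes "nat_interval T" "x \<in> T"
  shows "nat_interval (T - {x}) \<longleftrightarrow> (\<forall>y\<in>T - {x}. y < x) \<or> (\<forall>y\<in>T - {x}. x < y)"
  using nat_interval_remove[OF assms] extreme_if_nat_interval_remove by blast

lemma left_unimodal_iff_prefixes:
  "distinct xs \<Longrightarrow>
    (\<forall>k. nat_interval (set (take k xs))) \<longleftrightarrow> left_unimodal xs \<and> nat_interval (set xs)"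
proof (induction xs rule: rev_induct)
  case (snoc x xs)
  have prefixes: "(\<forall>k. nat_interval (set (take k (xs @ [x])))) \<longleftrightarrow>
      (\<forall>k. nat_interval (set (take k xs))) \<and> nat_interval (set (xs @ [x]))"
  proof
    assume all: "\<forall>k. nat_interval (set (take k (xs @ [x])))"
    have "nat_interval (set (take k xs))" for k
      using all[rule_format, of "min k (length xs)"]
      by (cases "k \<le> length xs") (simp_all add: min_def)
    moreover have "nat_interval (set (xs @ [x]))"
      using all[rule_format, of "Suc (length xs)"] by simp
    ultimately show "(\<forall>k. nat_interval (set (take k xs))) \<and> nat_interval (set (xs @ [x]))"
      by blast
  next
    assume H: "(\<forall>k. nat_interval (set (take k xs))) \<and> nat_interval (set (xs @ [x]))"
    show "\<forall>k. nat_interval (set (take k (xs @ [x])))"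
    proof
      fix k
      show "nat_interval (set (take k (xs @ [x])))"
        using H by (cases "k \<le> length xs") auto
    qed
  qed
  show ?case
  proof (cases "nat_interval (set (xs @ [x]))")
    case True
    have x: "x \<notin> set xs" using snoc.prems by simp
    then have "set (xs @ [x]) - {x} = set xs" by auto
    then have extreme: "nat_interval (set xs) \<longleftrightarrow> (\<forall>y\<in>set xs. y < x) \<or> (\<forall>y\<in>set xs. x < y)"
      using nat_interval_remove_iff[OF True, of x] by simp
    have "(\<forall>k. nat_interval (set (take k (xs @ [x])))) \<longleftrightarrow> (\<forall>k. nat_interval (set (take k xs)))"
      using prefixes True by simp
    also have "\<dots> \<longleftrightarrow> left_unimodal xs \<and> nat_interval (set xs)"
      using snoc.IH snoc.prems by simp
    also have "\<dots> \<longleftrightarrow> left_unimodal (xs @ [x])"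
      using extreme x by (simp add: left_unimodal_snoc)
    finally show ?thesis using True by simp
  qed (use prefixes in simp)
qed simp

lemma right_unimodal_iff_suffixes:
  assumes "distinct xs"
  shows "(\<forall>k. nat_interval (set (drop k xs))) \<longleftrightarrow> right_unimodal xs \<and> nat_interval (set xs)"
proof -
  have "set (take k (rev xs)) = set (drop (length xs - k) xs)" for k
    by (simp add: take_rev)
  moreover have "set (drop k xs) = set (take (length xs - k) (rev xs))" for k
    by (cases "k \<le> length xs") (simp_all add: take_rev)
  ultimately have "(\<forall>k. nat_interval (set (drop k xs))) \<longleftrightarrow>
      (\<forall>k. nat_interval (set (take k (rev xs))))"
    by metis
  then show ?thesis
    using left_unimodal_iff_prefixes[of "rev xs"] assms by (simp add: right_unimodal_def)
qed

lemma nat_interval_diff_top: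
  assumes "nat_interval T" "T \<subseteq> {1..n}" "n \<in> T"
  shows "nat_interval ({1..n} - T)"
proof -
  obtain a b where "T = {a..b}" using assms(1) by (auto simp: nat_interval_def)
  then have "{1..n} - T = {1..a - 1}" using assms(2,3) by auto
  then show ?thesis by simp
qed

lemma nat_interval_partition_iff:
  assumes "S \<union> T = {1..n - 1}" "S \<inter> T = {}"
  shows "nat_interval S \<and> nat_interval T \<longleftrightarrow> S = {1..card S} \<or> S = {n - card S..n - 1}"
proof
  assume "nat_interval S \<and> nat_interval T"
  then obtain a b c d where S: "S = {a..b}" and T: "T = {c..d}"
    by (auto simp: nat_interval_def)
  show "S = {1..card S} \<or> S = {n - card S..n - 1}"
  proof (cases "a \<le> b")
    case True
    have "a = 1 \<or> b = n - 1"
    proof (rule ccontr)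
      assume "\<not> (a = 1 \<or> b = n - 1)"
      moreover have "a \<in> {1..n - 1}" "b \<in> {1..n - 1}"
        using assms(1) True unfolding S by auto
      ultimately have "a - 1 \<in> {1..n - 1} - S" "b + 1 \<in> {1..n - 1} - S"
        unfolding S by auto
      then have "a - 1 \<in> T" "b + 1 \<in> T"
        using assms by auto
      then have "a \<in> T" using True unfolding T by auto
      then show False using assms(2) True S by auto
    qed
    then show ?thesis using S True assms(1) by auto
  qed (use S in auto)
next
  assume shape: "S = {1..card S} \<or> S = {n - card S..n - 1}"
  define k where "k = card S"
  have T: "T = {1..n - 1} - S" using assms by blast
  from shape have "S = {1..k} \<and> T = {k + 1..n - 1} \<or> S = {n - k..n - 1} \<and> T = {1..n - k - 1}"
    unfolding T k_def[symmetric] by auto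
  then show "nat_interval S \<and> nat_interval T" by auto
qed

section \<open>Permutations as words\<close>

definition perm_word :: "nat \<Rightarrow> nat list \<Rightarrow> bool" where
  "perm_word n w \<longleftrightarrow> distinct w \<and> set w = {1..n}"

definition perm_of_word :: "nat \<Rightarrow> nat list \<Rightarrow> nat \<Rightarrow> nat" where
  "perm_of_word n w = (\<lambda>i. if i \<in> {1..n} then w ! (i - 1) else i)"

lemma perm_word_length: "perm_word n w \<Longrightarrow> length w = n"
  unfolding perm_word_def by (metis card_atLeastAtMost diff_Suc_1 distinct_card)

lemma perm_of_word_permutes:
  assumes "perm_word n w"
  shows "perm_of_word n w permutes {1..n}"
proof (rule bij_imp_permutes)
  have len: "length w = n" and d: "distinct w" and s: "set w = {1..n}"
    using assms perm_word_length by (auto simp: perm_word_def)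
  show "bij_betw (perm_of_word n w) {1..n} {1..n}"
  proof (rule bij_betw_imageI)
    show "inj_on (perm_of_word n w) {1..n}"
    proof (rule inj_onI)
      fix i j assume "i \<in> {1..n}" "j \<in> {1..n}" "perm_of_word n w i = perm_of_word n w j"
      then have "w ! (i - 1) = w ! (j - 1)" "i - 1 < length w" "j - 1 < length w"
        using len by (auto simp: perm_of_word_def)
      then have "i - 1 = j - 1" using d nth_eq_iff_index_eq by blast
      moreover have "1 \<le> i" "1 \<le> j" using \<open>i \<in> {1..n}\<close> \<open>j \<in> {1..n}\<close> by simp_all
      ultimately show "i = j" by arith
    qed
    have "perm_of_word n w ` {1..n} = (\<lambda>i. w ! i) ` {..<n}"
      by (force simp: perm_of_word_def image_iff intro: bexI[of _ "Suc _"])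
    also have "\<dots> = {1..n}"
      using s len by (auto simp: set_conv_nth)
    finally show "perm_of_word n w ` {1..n} = {1..n}" .
  qed
qed (auto simp: perm_of_word_def)

lemma perm_word_map:
  assumes "p permutes {1..n}"
  shows "perm_word n (map p [1..<Suc n])"
proof -
  have "set [1..<Suc n] = {1..n}" by auto
  then show ?thesis
    using permutes_inj_on[OF assms] permutes_image[OF assms]
    by (simp add: perm_word_def distinct_map del: upt_Suc)
qed

lemma perm_of_word_map:
  assumes "p permutes {1..n}"
  shows "perm_of_word n (map p [1..<Suc n]) = p"
proof
  fix i
  show "perm_of_word n (map p [1..<Suc n]) i = p i"
    using permutes_not_in[OF assms, of i] by (auto simp: perm_of_word_def simp del: upt_Suc)
qed

lemma map_perm_of_word:
  assumes "length w = n"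
  shows "map (perm_of_word n w) [1..<Suc n] = w"
  using assms by (intro nth_equalityI) (simp_all add: perm_of_word_def del: upt_Suc)

lemma perm_of_word_image:
  assumes "length w = n" "j \<le> n"
  shows "perm_of_word n w ` {1..j} = set (take j w)"
proof -
  have "perm_of_word n w ` {1..j} = (\<lambda>i. w ! i) ` {..<j}"
    using assms(2) by (force simp: perm_of_word_def image_iff intro: bexI[of _ "Suc _"])
  also have "\<dots> = set (take j w)"
    using assms nth_image[of j w] by (simp add: lessThan_atLeast0)
  finally show ?thesis .
qed

lemma inv_perm_of_word:
  assumes "perm_word n (xs @ v # ys)"
  shows "inv (perm_of_word n (xs @ v # ys)) v = length xs + 1"
proof -
  have "perm_of_word n (xs @ v # ys) (length xs + 1) = v"
    using perm_word_length[OF assms] by (simp add: perm_of_word_def)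
  then show ?thesis
    using permutes_inv_eq[OF perm_of_word_permutes[OF assms]] by blast
qed

lemma Des_perm_of_word: "length w = n \<Longrightarrow> Des n (perm_of_word n w) = seq_des w"
  by (auto simp: Des_def seq_des_def perm_of_word_def)

lemma perm_word_split_iff:
  "perm_word n (xs @ n # ys) \<longleftrightarrow> 1 \<le> n \<and> distinct (xs @ ys) \<and> set (xs @ ys) = {1..n - 1}"
proof
  assume w: "perm_word n (xs @ n # ys)"
  then have "n \<notin> set (xs @ ys)" "insert n (set (xs @ ys)) = {1..n}"
    by (auto simp: perm_word_def)
  moreover have "{1..n} - {n} = {1..n - 1}" by auto
  ultimately show "1 \<le> n \<and> distinct (xs @ ys) \<and> set (xs @ ys) = {1..n - 1}"
    using w by (auto simp: perm_word_def)
next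
  assume "1 \<le> n \<and> distinct (xs @ ys) \<and> set (xs @ ys) = {1..n - 1}"
  moreover have "1 \<le> n \<Longrightarrow> insert n {1..n - 1} = {1..n}" "n \<notin> {1..n - 1}" by auto
  ultimately show "perm_word n (xs @ n # ys)"
    by (auto simp: perm_word_def)
qed

lemma permutes_split_at_max:
  assumes "1 \<le> n" "q permutes {1..n}"
  obtains xs ys where "perm_word n (xs @ n # ys)" "q = perm_of_word n (xs @ n # ys)"
proof -
  have w: "perm_word n (map q [1..<Suc n])" using perm_word_map[OF assms(2)] .
  then have "n \<in> set (map q [1..<Suc n])" using assms(1) by (simp add: perm_word_def)
  then obtain xs ys where "map q [1..<Suc n] = xs @ n # ys" by (meson split_list)
  then show thesis
    using that w perm_of_word_map[OF assms(2)] by metis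
qed

text \<open>For a word xs @ n # ys with maximum n, wrap_des xs ys says that n is a cyclic descent of
  the permutation, i.e. that its last entry exceeds its first.\<close>

definition wrap_des :: "nat list \<Rightarrow> nat list \<Rightarrow> bool" where
  "wrap_des xs ys \<longleftrightarrow> xs \<noteq> [] \<and> (ys = [] \<or> hd xs < last ys)"

lemma wrap_des_eq_iff:
  assumes "length xs = length xs'" "length ys = length ys'"
  shows "wrap_des xs ys = wrap_des xs' ys' \<longleftrightarrow>
    (ys \<noteq> [] \<and> xs \<noteq> [] \<and> hd xs < last ys \<longleftrightarrow> ys' \<noteq> [] \<and> xs' \<noteq> [] \<and> hd xs' < last ys')"
proof -
  have "xs = [] \<longleftrightarrow> xs' = []" "ys = [] \<longleftrightarrow> ys' = []" using assms by auto
  then show ?thesis by (auto simp: wrap_des_def)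
qed

lemma Des_eq_cDes_diff: "Des n p = cDes n p - {n}"
  by (auto simp: cDes_def Des_def)

lemma cDes_perm_of_word:
  assumes w: "perm_word n (xs @ n # ys)"
  shows "cDes n (perm_of_word n (xs @ n # ys)) =
    seq_des (xs @ n # ys) \<union> (if wrap_des xs ys then {n} else {})"
proof -
  let ?w = "xs @ n # ys" and ?p = "perm_of_word n (xs @ n # ys)"
  have len: "length ?w = n" and n: "1 \<le> n" and below: "\<forall>x\<in>set (xs @ ys). x < n"
    using perm_word_length[OF w] w by (auto simp: perm_word_split_iff)
  have "?p 1 = hd ?w" "?p n = last ?w"
    using len n by (auto simp: perm_of_word_def hd_conv_nth last_conv_nth)
  moreover have "hd ?w < last ?w \<longleftrightarrow> wrap_des xs ys"
    using below by (cases xs; cases ys rule: rev_cases) (auto simp: wrap_des_def)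
  moreover have "cDes n ?p = Des n ?p \<union> (if ?p 1 < ?p n then {n} else {})"
    using n by (auto simp: cDes_def Des_def)
  ultimately show ?thesis
    using Des_perm_of_word[OF len] by simp
qed

lemma cDes_perm_of_word_eq_iff:
  assumes w: "perm_word n (xs @ n # ys)" and w': "perm_word n (xs' @ n # ys')"
    and len: "length xs = length xs'"
  shows "cDes n (perm_of_word n (xs @ n # ys)) = cDes n (perm_of_word n (xs' @ n # ys')) \<longleftrightarrow>
    seq_des xs = seq_des xs' \<and> seq_des ys = seq_des ys' \<and> wrap_des xs ys = wrap_des xs' ys'"
proof -
  have len': "length ys = length ys'"
    using perm_word_length[OF w] perm_word_length[OF w'] len by simp
  have below: "\<forall>x\<in>set (xs @ ys). x < n" "\<forall>x\<in>set (xs' @ ys'). x < n"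
    using w w' by (auto simp: perm_word_split_iff)
  have "n \<notin> seq_des (xs @ n # ys)" "n \<notin> seq_des (xs' @ n # ys')"
    using seq_des_subset perm_word_length[OF w] perm_word_length[OF w'] by fastforce+
  then have "cDes n (perm_of_word n (xs @ n # ys)) = cDes n (perm_of_word n (xs' @ n # ys')) \<longleftrightarrow>
      seq_des (xs @ n # ys) = seq_des (xs' @ n # ys') \<and> wrap_des xs ys = wrap_des xs' ys'"
    unfolding cDes_perm_of_word[OF w] cDes_perm_of_word[OF w'] by auto
  then show ?thesis
    unfolding seq_des_append_Cons_eq_iff[OF len len' below] by blast
qed

section \<open>The map phi and the set A_n\<close>

lemma phi_eqI:
  assumes "inv p n = inv q n" "cDes n p = cDes n q"
  shows "phi n p = phi n q"
  unfolding phi_def Let_def Des_eq_cDes_diff assms ..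

text \<open>The set of entries before n in phi p, when n stands at position k + 1 of p and b says whether
  n is a cyclic descent of p.\<close>

definition phi_prefix_set :: "nat \<Rightarrow> nat \<Rightarrow> bool \<Rightarrow> nat set" where
  "phi_prefix_set n k b = (if b then {1..k} else {n - k..n - 1})"

lemma phi_prefix_set_subset_card:
  assumes "k < n"
  shows "phi_prefix_set n k b \<subseteq> {1..n - 1}" "card (phi_prefix_set n k b) = k"
  using assms by (auto simp: phi_prefix_set_def)

lemma phi_perm_of_word:
  assumes w: "perm_word n (xs @ n # ys)"
  defines "S \<equiv> phi_prefix_set n (length xs) (wrap_des xs ys)"
  shows "phi n (perm_of_word n (xs @ n # ys)) =
    perm_of_word n (lu_arr S (seq_des xs) @ n # ru_arr ({1..n - 1} - S) (seq_des ys))"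
proof -
  let ?p = "perm_of_word n (xs @ n # ys)"
  have len: "length xs < n" using perm_word_length[OF w] by simp
  have "n \<in> cDes n ?p \<longleftrightarrow> wrap_des xs ys"
    using cDes_perm_of_word[OF w] seq_des_subset[of "xs @ n # ys"] perm_word_length[OF w] by auto
  moreover have "{1..n - 1} - {1..n - (length xs + 1)} = {n - length xs..n - 1}"
    using len by auto
  ultimately have S: "(if n \<in> cDes n ?p then {1..length xs + 1 - 1}
      else {1..n - 1} - {1..n - (length xs + 1)}) = S"
    by (simp add: S_def phi_prefix_set_def)
  have "phi n ?p = (\<lambda>i. if i \<in> {1..n}
      then (lu_arr S (seq_des xs) @ [n] @ ru_arr ({1..n - 1} - S) (seq_des ys)) ! (i - 1) else i)"
    unfolding phi_def Let_def inv_perm_of_word[OF w] Des_perm_of_word[OF perm_word_length[OF w]]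
      seq_des_append_Cons_parts S ..
  also have "\<dots> = perm_of_word n (lu_arr S (seq_des xs) @ n # ru_arr ({1..n - 1} - S) (seq_des ys))"
    by (simp only: perm_of_word_def append_Cons append_Nil)
  finally show ?thesis .
qed

lemma perm_word_set_drop:
  assumes "perm_word n w"
  shows "set (drop j w) = {1..n} - set (take j w)"
proof -
  have "set (take j w) \<union> set (drop j w) = {1..n}"
    using assms by (metis append_take_drop_id perm_word_def set_append)
  moreover have "set (take j w) \<inter> set (drop j w) = {}"
    using assms by (simp add: perm_word_def set_take_disj_set_drop_if_distinct)
  ultimately show ?thesis by blast
qed

lemma Aset_perm_of_word_iff:
  assumes w: "perm_word n w"
  shows "perm_of_word n w \<in> Aset n \<longleftrightarrow>
    (\<forall>j. nat_interval (set (take j w)) \<or> nat_interval (set (drop j w)))"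
proof -
  have len: "length w = n" using perm_word_length[OF w] .
  have "cyc_interval n (perm_of_word n w ` {1..j}) \<longleftrightarrow>
      nat_interval (set (take j w)) \<or> nat_interval (set (drop j w))" if "j \<in> {1..n}" for j
  proof -
    have "set (take j w) \<subseteq> {1..n}"
      using w set_take_subset by (fastforce simp: perm_word_def)
    then show ?thesis
      using that perm_of_word_image[OF len] cyc_interval_iff_nat_interval perm_word_set_drop[OF w]
      by simp
  qed
  moreover have "nat_interval (set (take j w))" if "j \<notin> {1..n}" for j
    using that w len by (cases "j = 0") (auto simp: perm_word_def)
  ultimately show ?thesis
    using perm_of_word_permutes[OF w] by (auto simp: Aset_def)
qed

lemma Aset_perm_of_word_split_iff:
  assumes w: "perm_word n (xs @ n # ys)"
  shows "perm_of_word n (xs @ n # ys) \<in> Aset n \<longleftrightarrow>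
    (\<forall>k. nat_interval (set (take k xs))) \<and> (\<forall>k. nat_interval (set (drop k ys)))"
  unfolding Aset_perm_of_word_iff[OF w]
proof (intro iffI conjI allI)
  let ?w = "xs @ n # ys"
  have sub: "set (take j ?w) \<subseteq> {1..n}" "set (drop j ?w) \<subseteq> {1..n}" for j
    using w set_take_subset set_drop_subset by (fastforce simp: perm_word_def)+
  have take: "set (take j ?w) = {1..n} - set (drop j ?w)" for j
    using perm_word_set_drop[OF w, of j] sub(1)[of j] by blast
  assume H: "\<forall>j. nat_interval (set (take j ?w)) \<or> nat_interval (set (drop j ?w))"
  fix k
  let ?j = "min k (length xs)"
  have "n \<in> set (drop ?j ?w)" by simp
  then have "nat_interval (set (take ?j ?w))"
    using H[rule_format, of ?j] nat_interval_diff_top[OF _ sub(2)] unfolding take by blast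
  moreover have "take ?j ?w = take k xs"
    by (cases "k \<le> length xs") (simp_all add: min_def)
  ultimately show "nat_interval (set (take k xs))" by simp
  let ?j = "length xs + 1 + k"
  have "n \<in> set (take ?j ?w)" by simp
  then have "nat_interval (set (drop ?j ?w))"
    using H[rule_format, of ?j] nat_interval_diff_top[OF _ sub(1)] perm_word_set_drop[OF w] by metis
  then show "nat_interval (set (drop k ys))" by simp
next
  assume H: "(\<forall>k. nat_interval (set (take k xs))) \<and> (\<forall>k. nat_interval (set (drop k ys)))"
  fix j
  show "nat_interval (set (take j (xs @ n # ys))) \<or> nat_interval (set (drop j (xs @ n # ys)))"
  proof (cases "j \<le> length xs")
    case False
    then have "drop j (xs @ n # ys) = drop (j - length xs - 1) ys"
      by (simp add: drop_Cons')
    then show ?thesis using H by simp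
  qed (use H in simp)
qed

lemma wrap_des_phi_prefix_set:
  assumes "distinct (xs @ ys)" "set (xs @ ys) = {1..n - 1}" "xs \<noteq> []" "ys \<noteq> []"
    and xs: "set xs = phi_prefix_set n (length xs) b"
  shows "wrap_des xs ys = b"
proof -
  have ys: "set ys = {1..n - 1} - set xs" using assms(1,2) by auto
  have "hd xs \<in> set xs" "last ys \<in> set ys" using assms(3,4) by simp_all
  then show ?thesis
    using xs ys assms(3) by (cases b) (auto simp: wrap_des_def phi_prefix_set_def)
qed

lemma set_eq_phi_prefix_set_iff:
  assumes d: "distinct (xs @ ys)" and s: "set (xs @ ys) = {1..n - 1}" and n: "1 \<le> n"
  shows "set xs = phi_prefix_set n (length xs) (wrap_des xs ys) \<longleftrightarrow>
    nat_interval (set xs) \<and> nat_interval (set ys)"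
proof -
  have "card (set xs) = length xs" using d by (simp add: distinct_card)
  then have "nat_interval (set xs) \<and> nat_interval (set ys) \<longleftrightarrow>
      (\<exists>b. set xs = phi_prefix_set n (length xs) b)"
    using nat_interval_partition_iff[of "set xs" "set ys" n] d s
    by (auto simp: phi_prefix_set_def)
  also have "\<dots> \<longleftrightarrow> set xs = phi_prefix_set n (length xs) (wrap_des xs ys)"
  proof
    assume "\<exists>b. set xs = phi_prefix_set n (length xs) b"
    then obtain b where b: "set xs = phi_prefix_set n (length xs) b" ..
    consider "xs = []" | "ys = []" | "xs \<noteq> []" "ys \<noteq> []" by blast
    then show "set xs = phi_prefix_set n (length xs) (wrap_des xs ys)"
    proof cases
      case 2
      then have "length xs = n - 1" "set xs = {1..n - 1}"
        using d s distinct_card[of xs] by auto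
      then show ?thesis using 2 n by (auto simp: phi_prefix_set_def wrap_des_def)
    qed (use b n wrap_des_phi_prefix_set[OF d s _ _ b] in \<open>auto simp: phi_prefix_set_def\<close>)
  qed blast
  finally show ?thesis by simp
qed

lemma Aset_perm_of_word_unimodal_iff:
  assumes w: "perm_word n (xs @ n # ys)"
  shows "perm_of_word n (xs @ n # ys) \<in> Aset n \<longleftrightarrow>
    left_unimodal xs \<and> right_unimodal ys \<and> set xs = phi_prefix_set n (length xs) (wrap_des xs ys)"
proof -
  have d: "distinct (xs @ ys)" and s: "set (xs @ ys) = {1..n - 1}" and n: "1 \<le> n"
    using w by (simp_all add: perm_word_split_iff)
  then show ?thesis
    unfolding Aset_perm_of_word_split_iff[OF w] set_eq_phi_prefix_set_iff[OF d s n]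
    using left_unimodal_iff_prefixes[of xs] right_unimodal_iff_suffixes[of ys] by auto
qed

lemma wrap_des_eq_if_phi_prefix_set:
  assumes w: "perm_word n (xs' @ n # ys')"
    and len: "length xs' = length xs" "length ys' = length ys"
    and xs': "set xs' = phi_prefix_set n (length xs) (wrap_des xs ys)"
  shows "wrap_des xs' ys' = wrap_des xs ys"
proof (cases "xs = [] \<or> ys = []")
  case True
  then show ?thesis using len by (auto simp: wrap_des_def)
next
  case False
  then have "xs' \<noteq> []" "ys' \<noteq> []" using len by auto
  moreover have "distinct (xs' @ ys')" "set (xs' @ ys') = {1..n - 1}"
    using w by (simp_all add: perm_word_split_iff)
  ultimately show ?thesis
    using wrap_des_phi_prefix_set[of xs' ys' n "wrap_des xs ys"] len xs' by simp
qed

lemma phi_perm_of_word_unimodal: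
  assumes w: "perm_word n (xs @ n # ys)"
  obtains L R where "phi n (perm_of_word n (xs @ n # ys)) = perm_of_word n (L @ n # R)"
    "perm_word n (L @ n # R)" "length L = length xs" "length R = length ys"
    "left_unimodal L" "right_unimodal R" "set L = phi_prefix_set n (length xs) (wrap_des xs ys)"
    "seq_des L = seq_des xs" "seq_des R = seq_des ys"
proof -
  define S where "S = phi_prefix_set n (length xs) (wrap_des xs ys)"
  define L where "L = lu_arr S (seq_des xs)"
  define R where "R = ru_arr ({1..n - 1} - S) (seq_des ys)"
  have n: "1 \<le> n" and "distinct (xs @ ys)" "set (xs @ ys) = {1..n - 1}"
    using w by (simp_all add: perm_word_split_iff)
  then have len: "length xs + length ys = n - 1"
    using distinct_card[of "xs @ ys"] by simp
  then have S: "S \<subseteq> {1..n - 1}" "card S = length xs"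
    using phi_prefix_set_subset_card[of "length xs" n] n by (simp_all add: S_def)
  then have S': "card ({1..n - 1} - S) = length ys"
    using len by (simp add: card_Diff_subset finite_subset)
  have "finite S" using S(1) by (rule finite_subset) simp
  then have L: "set L = S" "left_unimodal L" "seq_des L = seq_des xs"
    using lu_arr_spec[of S "seq_des xs"] S(2) seq_des_subset[of xs] by (simp_all add: L_def)
  have R: "set R = {1..n - 1} - S" "right_unimodal R" "seq_des R = seq_des ys"
    using ru_arr_spec[of "{1..n - 1} - S" "seq_des ys"] S' seq_des_subset[of ys]
    by (auto simp: R_def)
  have "length L = length xs" "length R = length ys"
    using L R S S' left_unimodal_distinct right_unimodal_distinct distinct_card by metis+
  moreover have "perm_word n (L @ n # R)"
    using L R S(1) n left_unimodal_distinct right_unimodal_distinct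
    by (auto simp: perm_word_split_iff)
  moreover have "phi n (perm_of_word n (xs @ n # ys)) = perm_of_word n (L @ n # R)"
    unfolding L_def R_def S_def by (rule phi_perm_of_word[OF w])
  ultimately show thesis
    using that L R by (simp add: S_def)
qed

lemma phi_in_Aset_preserves_stats:
  assumes n: "1 \<le> n" and q: "q permutes {1..n}"
  shows "phi n q \<in> Aset n \<and> cDes n (phi n q) = cDes n q \<and> inv (phi n q) n = inv q n"
proof -
  obtain xs ys where w: "perm_word n (xs @ n # ys)" and q: "q = perm_of_word n (xs @ n # ys)"
    using permutes_split_at_max[OF n q] .
  obtain L R where phi: "phi n q = perm_of_word n (L @ n # R)" and wLR: "perm_word n (L @ n # R)"
    and lens: "length L = length xs" "length R = length ys"
    and uni: "left_unimodal L" "right_unimodal R"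
    and L: "set L = phi_prefix_set n (length xs) (wrap_des xs ys)"
    and des: "seq_des L = seq_des xs" "seq_des R = seq_des ys"
    using phi_perm_of_word_unimodal[OF w] unfolding q by blast
  have wrap: "wrap_des L R = wrap_des xs ys"
    using wrap_des_eq_if_phi_prefix_set[OF wLR lens L] .
  have "phi n q \<in> Aset n"
    unfolding phi Aset_perm_of_word_unimodal_iff[OF wLR] using uni L wrap lens by simp
  moreover have "cDes n (phi n q) = cDes n q"
    unfolding phi by (simp add: q cDes_perm_of_word_eq_iff[OF wLR w lens(1)] des wrap)
  moreover have "inv (phi n q) n = inv q n"
    unfolding phi by (simp add: q inv_perm_of_word[OF wLR] inv_perm_of_word[OF w] lens)
  ultimately show ?thesis by blast
qed

lemma phi_Aset:
  assumes n: "1 \<le> n" and q: "q \<in> Aset n"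
  shows "phi n q = q"
proof -
  obtain xs ys where w: "perm_word n (xs @ n # ys)" and q_eq: "q = perm_of_word n (xs @ n # ys)"
    using permutes_split_at_max[OF n] q by (auto simp: Aset_def)
  then have "left_unimodal xs" "right_unimodal ys"
    and xs: "set xs = phi_prefix_set n (length xs) (wrap_des xs ys)"
    using q Aset_perm_of_word_unimodal_iff[OF w] by auto
  moreover have ys: "{1..n - 1} - set xs = set ys"
    using w by (auto simp: perm_word_split_iff)
  ultimately show ?thesis
    unfolding q_eq phi_perm_of_word[OF w] xs[symmetric] ys by (simp add: lu_arr_eqI ru_arr_eqI)
qed

section \<open>The set L_{n-1}C_n\<close>

lemma funpow_cyc:
  assumes "1 \<le> n"
  shows "(cyc n ^^ k) i = (if i \<in> {1..n} then (i - 1 + k) mod n + 1 else i)"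
proof (induction k)
  case 0
  show ?case
  proof (cases "i \<in> {1..n}")
    case True
    then have "(i - 1) mod n = i - 1" by (intro mod_less) auto
    then show ?thesis using True by simp
  qed auto
next
  case (Suc k)
  show ?case
  proof (cases "i \<in> {1..n}")
    case True
    define r where "r = (i - 1 + k) mod n"
    have r: "r < n" using assms by (simp add: r_def)
    have "(cyc n ^^ Suc k) i = cyc n (r + 1)"
      using Suc True by (simp add: r_def)
    also have "\<dots> = (if Suc r = n then 0 else Suc r) + 1"
      using r by (auto simp: cyc_def)
    also have "\<dots> = (i - 1 + Suc k) mod n + 1"
      by (simp add: r_def mod_Suc)
    finally show ?thesis using True by simp
  next
    case False
    then have "cyc n i = i" using assms by (auto simp: cyc_def)
    moreover have "(cyc n ^^ k) i = i" using Suc False by auto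
    ultimately show ?thesis using False by auto
  qed
qed

lemma perm_of_word_comp_funpow_cyc:
  assumes len: "length w = n" and n: "1 \<le> n"
  shows "perm_of_word n w \<circ> (cyc n ^^ k) = perm_of_word n (rotate k w)"
proof
  fix i
  show "(perm_of_word n w \<circ> (cyc n ^^ k)) i = perm_of_word n (rotate k w) i"
  proof (cases "i \<in> {1..n}")
    case True
    have "(i - 1 + k) mod n + 1 \<in> {1..n}" using n by (simp add: Suc_le_eq)
    then have "(perm_of_word n w \<circ> (cyc n ^^ k)) i = w ! ((i - 1 + k) mod n)"
      using True n by (simp add: funpow_cyc[OF n] perm_of_word_def)
    also have "\<dots> = rotate k w ! (i - 1)"
    proof -
      have "rotate k w ! (i - 1) = w ! ((k + (i - 1)) mod length w)"
        using True len by (intro nth_rotate) auto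
      then show ?thesis using len by (simp only: add.commute)
    qed
    also have "\<dots> = perm_of_word n (rotate k w) i"
      using True by (simp add: perm_of_word_def)
    finally show ?thesis .
  next
    case False
    then have "(cyc n ^^ k) i = i" by (auto simp: funpow_cyc[OF n])
    then show ?thesis using False by (auto simp: perm_of_word_def)
  qed
qed

lemma Lset_iff:
  assumes n: "1 \<le> n"
  shows "s \<in> Lset n \<longleftrightarrow>
    (\<exists>u. left_unimodal u \<and> set u = {1..n - 1} \<and> s = perm_of_word n (u @ [n]))" (is "_ \<longleftrightarrow> ?R")
proof
  assume "s \<in> Lset n"
  then have s: "s permutes {1..n - 1}" and lu: "left_unimodal (map s [1..<n])"
    by (auto simp: Lset_def)
  have "map s [1..<Suc n] = map s [1..<n] @ [n]"
    using n permutes_not_in[OF s, of n] by simp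
  moreover have "s permutes {1..n}" by (rule permutes_subset[OF s]) auto
  ultimately have "s = perm_of_word n (map s [1..<n] @ [n])"
    using perm_of_word_map by metis
  moreover have "{1..<n} = {1..n - 1}" using n by auto
  then have "set (map s [1..<n]) = {1..n - 1}"
    using permutes_image[OF s] by simp
  ultimately show ?R
    using lu by blast
next
  assume ?R
  then obtain u where u: "left_unimodal u" "set u = {1..n - 1}"
    and s: "s = perm_of_word n (u @ [n])"
    by blast
  have w: "perm_word n (u @ [n])"
    using perm_word_split_iff[of n u "[]"] u n left_unimodal_distinct by simp
  then have "map s [1..<n] @ [s n] = u @ [n]"
    using map_perm_of_word[OF perm_word_length[OF w]] n s by simp
  moreover have "s permutes {1..n - 1}"
    unfolding s
  proof (rule permutes_superset[OF perm_of_word_permutes[OF w]])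
    fix x assume "x \<in> {1..n} - {1..n - 1}"
    then have "x = n" by auto
    then show "perm_of_word n (u @ [n]) x = x"
      using \<open>map s [1..<n] @ [s n] = u @ [n]\<close> s by simp
  qed
  ultimately show "s \<in> Lset n" using u by (simp add: Lset_def)
qed

lemma perm_word_of_left_unimodal:
  assumes "1 \<le> n" "left_unimodal (ys @ xs)" "set (ys @ xs) = {1..n - 1}"
  shows "perm_word n (xs @ n # ys)"
  using assms left_unimodal_distinct[OF assms(2)] by (auto simp: perm_word_split_iff)

text \<open>The words of L_{n-1}C_n are the rotations of u @ [n] with u left-unimodal on [n-1].\<close>

lemma LC_iff:
  assumes n: "1 \<le> n"
  shows "p \<in> LC n \<longleftrightarrow>
    (\<exists>xs ys. left_unimodal (ys @ xs) \<and> set (ys @ xs) = {1..n - 1} \<and>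
      p = perm_of_word n (xs @ n # ys))" (is "_ \<longleftrightarrow> ?R")
proof
  assume "p \<in> LC n"
  then obtain u k where u: "left_unimodal u" "set u = {1..n - 1}"
    and p: "p = perm_of_word n (u @ [n]) \<circ> (cyc n ^^ k)"
    unfolding LC_def Lset_iff[OF n] by blast
  have len: "length u = n - 1"
    using u distinct_card[OF left_unimodal_distinct[OF u(1)]] by simp
  define t where "t = k mod n"
  have "t < n" using n by (simp add: t_def)
  then have "t \<le> length u" using len by simp
  then have "rotate t (take t u @ drop t u @ [n]) = drop t u @ n # take t u"
    using rotate_append[of "take t u" "drop t u @ [n]"] by simp
  then have "rotate t (u @ [n]) = drop t u @ n # take t u"
    by (metis append_assoc append_take_drop_id)
  moreover have "p = perm_of_word n (rotate t (u @ [n]))"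
    using p perm_of_word_comp_funpow_cyc[of "u @ [n]" n k] len n
    by (simp add: t_def rotate_conv_mod[of k])
  ultimately show ?R
    using u by (intro exI[of _ "drop t u"] exI[of _ "take t u"]) simp
next
  assume ?R
  then obtain xs ys where u: "left_unimodal (ys @ xs)" "set (ys @ xs) = {1..n - 1}"
    and p: "p = perm_of_word n (xs @ n # ys)"
    by blast
  have "length (ys @ xs) = n - 1"
    using u distinct_card[OF left_unimodal_distinct[OF u(1)]] by simp
  then have "length (ys @ xs @ [n]) = n" using n by simp
  then have "p = perm_of_word n ((ys @ xs) @ [n]) \<circ> (cyc n ^^ length ys)"
    using p perm_of_word_comp_funpow_cyc[of "ys @ xs @ [n]" n "length ys"] n
    by (simp add: rotate_append)
  then show "p \<in> LC n"
    using u unfolding LC_def Lset_iff[OF n] by blast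
qed

lemma LC_permutes:
  assumes "1 \<le> n" "p \<in> LC n"
  shows "p permutes {1..n}"
proof -
  obtain xs ys where "left_unimodal (ys @ xs)" "set (ys @ xs) = {1..n - 1}"
    and p: "p = perm_of_word n (xs @ n # ys)"
    using assms LC_iff by blast
  then show ?thesis using p perm_of_word_permutes perm_word_of_left_unimodal assms(1) by simp
qed

lemma LC_eq_if_stats_eq:
  assumes n: "1 \<le> n" and p: "p \<in> LC n" and p': "p' \<in> LC n"
    and inv: "inv p n = inv p' n" and cDes: "cDes n p = cDes n p'"
  shows "p = p'"
proof -
  obtain xs ys where u: "left_unimodal (ys @ xs)" "set (ys @ xs) = {1..n - 1}"
    and p_eq: "p = perm_of_word n (xs @ n # ys)"
    using p LC_iff[OF n] by blast
  obtain xs' ys' where u': "left_unimodal (ys' @ xs')" "set (ys' @ xs') = {1..n - 1}"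
    and p'_eq: "p' = perm_of_word n (xs' @ n # ys')"
    using p' LC_iff[OF n] by blast
  have w: "perm_word n (xs @ n # ys)" and w': "perm_word n (xs' @ n # ys')"
    using u u' n perm_word_of_left_unimodal by blast+
  have lxs: "length xs = length xs'"
    using inv inv_perm_of_word[OF w] inv_perm_of_word[OF w'] p_eq p'_eq by simp
  then have lys: "length ys = length ys'"
    using perm_word_length[OF w] perm_word_length[OF w'] by simp
  have "seq_des xs = seq_des xs'" "seq_des ys = seq_des ys'" "wrap_des xs ys = wrap_des xs' ys'"
    using cDes cDes_perm_of_word_eq_iff[OF w w' lxs] p_eq p'_eq by simp_all
  then have "seq_des (ys @ xs) = seq_des (ys' @ xs')"
    using seq_des_append_eq_iff[OF lys lxs] wrap_des_eq_iff[OF lxs lys] by simp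
  then have "ys @ xs = ys' @ xs'"
    using left_unimodal_unique u u' by simp
  then show ?thesis
    using lys p_eq p'_eq by simp
qed

lemma LC_realizes_stats:
  assumes n: "1 \<le> n" and q: "q permutes {1..n}"
  shows "\<exists>p\<in>LC n. inv p n = inv q n \<and> cDes n p = cDes n q"
proof -
  obtain xs ys where w: "perm_word n (xs @ n # ys)" and q_eq: "q = perm_of_word n (xs @ n # ys)"
    using permutes_split_at_max[OF n q] .
  have len: "length (ys @ xs) = n - 1"
    using w distinct_card[of "xs @ ys"] by (simp add: perm_word_split_iff)
  define u where "u = lu_arr {1..n - 1} (seq_des (ys @ xs))"
  have u: "set u = {1..n - 1}" "left_unimodal u" "seq_des u = seq_des (ys @ xs)"
    using lu_arr_spec[of "{1..n - 1}" "seq_des (ys @ xs)"] seq_des_subset[of "ys @ xs"] len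
    by (auto simp: u_def)
  define ys' xs' where "ys' = take (length ys) u" and "xs' = drop (length ys) u"
  have u_eq: "u = ys' @ xs'" by (simp add: ys'_def xs'_def)
  have "length u = n - 1"
    using u distinct_card[OF left_unimodal_distinct[OF u(2)]] by simp
  then have lys: "length ys' = length ys" and lxs: "length xs' = length xs"
    using len by (auto simp: ys'_def xs'_def)
  have des: "seq_des xs' = seq_des xs" "seq_des ys' = seq_des ys"
    "wrap_des xs' ys' = wrap_des xs ys"
    using u(3) seq_des_append_eq_iff[OF lys lxs] wrap_des_eq_iff[OF lxs lys] u_eq by simp_all
  define p where "p = perm_of_word n (xs' @ n # ys')"
  have w': "perm_word n (xs' @ n # ys')"
    using u u_eq n perm_word_of_left_unimodal by simp
  have "p \<in> LC n"
    using u u_eq LC_iff[OF n] p_def by blast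
  moreover have "inv p n = inv q n"
    using inv_perm_of_word[OF w] inv_perm_of_word[OF w'] lxs p_def q_eq by simp
  moreover have "cDes n p = cDes n q"
    using cDes_perm_of_word_eq_iff[OF w' w lxs] des p_def q_eq by simp
  ultimately show ?thesis by blast
qed

lemma inj_on_phi_LC:
  assumes "1 \<le> n"
  shows "inj_on (phi n) (LC n)"
proof (rule inj_onI)
  fix p p' assume p: "p \<in> LC n" and p': "p' \<in> LC n" and eq: "phi n p = phi n p'"
  show "p = p'"
    using LC_eq_if_stats_eq[OF assms p p'] phi_in_Aset_preserves_stats[OF assms]
      LC_permutes[OF assms] p p' eq
    by metis
qed

lemma phi_image_LC:
  assumes "1 \<le> n"
  shows "phi n ` LC n = Aset n"
proof
  show "phi n ` LC n \<subseteq> Aset n"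
    using phi_in_Aset_preserves_stats[OF assms] LC_permutes[OF assms] by blast
  show "Aset n \<subseteq> phi n ` LC n"
  proof
    fix q assume q: "q \<in> Aset n"
    then have "q permutes {1..n}" by (simp add: Aset_def)
    then obtain p where "p \<in> LC n" "inv p n = inv q n" "cDes n p = cDes n q"
      using LC_realizes_stats[OF assms] by blast
    then show "q \<in> phi n ` LC n"
      using phi_eqI phi_Aset[OF assms q] by (metis image_eqI)
  qed
qed

theorem lemma6p9:
  fixes n :: nat
  assumes "n \<ge> 1"
  shows "bij_betw (phi n) (LC n) (Aset n)
    \<and> (\<forall>p\<in>LC n. cDes n (phi n p) = cDes n p \<and> inv (phi n p) n = inv p n)
    \<and> (\<forall>(x :: nat \<Rightarrow> 'a :: comm_ring_1) t.
         (\<Sum>p\<in>Aset n. (\<Prod>i\<in>cDes n p. x i) * t ^ (inv p n))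
       = (\<Sum>p\<in>LC n. (\<Prod>i\<in>cDes n p. x i) * t ^ (inv p n)))"
proof -
  have stats: "\<forall>p\<in>LC n. cDes n (phi n p) = cDes n p \<and> inv (phi n p) n = inv p n"
    using phi_in_Aset_preserves_stats[OF assms] LC_permutes[OF assms] by blast
  have bij: "bij_betw (phi n) (LC n) (Aset n)"
    using inj_on_phi_LC[OF assms] phi_image_LC[OF assms] by (simp add: bij_betw_def)
  have "(\<Sum>p\<in>Aset n. (\<Prod>i\<in>cDes n p. x i) * t ^ (inv p n))
      = (\<Sum>p\<in>LC n. (\<Prod>i\<in>cDes n p. x i) * t ^ (inv p n))" for x :: "nat \<Rightarrow> 'a" and t
  proof -
    have "(\<Sum>p\<in>Aset n. (\<Prod>i\<in>cDes n p. x i) * t ^ (inv p n))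
        = (\<Sum>p\<in>LC n. (\<Prod>i\<in>cDes n (phi n p). x i) * t ^ (inv (phi n p) n))"
      by (rule sum.reindex_bij_betw[OF bij, symmetric])
    also have "\<dots> = (\<Sum>p\<in>LC n. (\<Prod>i\<in>cDes n p. x i) * t ^ (inv p n))"
      using stats by (intro sum.cong) auto
    finally show ?thesis .
  qed
  then show ?thesis using bij stats by blast
qed

end
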